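(* Let $0\le t\le s$ and $m,n\ge1$ be integers. If there exist a $(t,s,n)$-AONT and a $(t,s,m)$-AONT, then there exists a $(t,s,mn)$-AONT.
   Context: Let $X$ be a finite alphabet with $|X|=v$ and $0\le t\le s$. A $(t,s,v)$-AONT is a bijection $\phi:X^s\to X^s$ such that for every $I\subseteq\{1,\dots,s\}$ with $|I|=t$ and every $J\subseteq\{1,\dots,s\}$ with $|J|=s-t$, the map $x\mapsto\big((x_i)_{i\in I},(\phi(x)_j)_{j\in J}\big)$ is a bijection $X^s\to X^t\times X^{s-t}$ (i.e. fixing any $s-t$ outputs leaves any $t$ inputs completely undetermined). *)

theory Defs
  imports "HOL-Library.FuncSet"
begin

abbreviation words :: "nat \<Rightarrow> 'a set \<Rightarrow> (nat \<Rightarrow> 'a) set" where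
  "words s X \<equiv> {1..s} \<rightarrow>\<^sub>E X"

text \<open>phi is a (t,s,v)-AONT over alphabet X (with v = card X).\<close>
definition is_AONT :: "nat \<Rightarrow> nat \<Rightarrow> 'a set \<Rightarrow> ((nat \<Rightarrow> 'a) \<Rightarrow> (nat \<Rightarrow> 'a)) \<Rightarrow> bool" where
  "is_AONT t s X \<phi> \<longleftrightarrow>
     bij_betw \<phi> (words s X) (words s X) \<and>
     (\<forall>I J. I \<subseteq> {1..s} \<longrightarrow> card I = t \<longrightarrow> J \<subseteq> {1..s} \<longrightarrow> card J = s - t \<longrightarrow>
        bij_betw (\<lambda>x. (restrict x I, restrict (\<phi> x) J)) (words s X)
                 ((I \<rightarrow>\<^sub>E X) \<times> (J \<rightarrow>\<^sub>E X)))"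

end

theory Submission
  imports Defs
begin

text \<open>Over the alphabet X \<times> Y a word is a pair of words, one over X and one over Y.
  Applying a (t,s)-AONT over X to the first coordinates and one over Y to the second gives a
  (t,s)-AONT over X \<times> Y: fixing t inputs and s - t outputs splits coordinatewise into the
  same data for the two factors, and a product of bijections is a bijection.\<close>

definition zip_fun :: "nat set \<Rightarrow> (nat \<Rightarrow> 'a) \<times> (nat \<Rightarrow> 'b) \<Rightarrow> nat \<Rightarrow> 'a \<times> 'b" where
  "zip_fun A uv = (\<lambda>i\<in>A. (fst uv i, snd uv i))"

definition unzip_fun :: "nat set \<Rightarrow> (nat \<Rightarrow> 'a \<times> 'b) \<Rightarrow> (nat \<Rightarrow> 'a) \<times> (nat \<Rightarrow> 'b)" where
  "unzip_fun A z = (restrict (fst \<circ> z) A, restrict (snd \<circ> z) A)"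

definition swap_middle :: "('a \<times> 'b) \<times> ('c \<times> 'd) \<Rightarrow> ('a \<times> 'c) \<times> ('b \<times> 'd)" where
  "swap_middle x = ((fst (fst x), fst (snd x)), (snd (fst x), snd (snd x)))"

lemma unzip_zip_fun: "uv \<in> (A \<rightarrow>\<^sub>E X) \<times> (A \<rightarrow>\<^sub>E Y) \<Longrightarrow> unzip_fun A (zip_fun A uv) = uv"
  unfolding unzip_fun_def zip_fun_def by (cases uv) (auto simp: fun_eq_iff PiE_def extensional_def)

lemma zip_unzip_fun: "z \<in> A \<rightarrow>\<^sub>E X \<times> Y \<Longrightarrow> zip_fun A (unzip_fun A z) = z"
  unfolding unzip_fun_def zip_fun_def by (auto simp: fun_eq_iff PiE_def extensional_def)

lemma zip_fun_in_PiE: "uv \<in> (A \<rightarrow>\<^sub>E X) \<times> (A \<rightarrow>\<^sub>E Y) \<Longrightarrow> zip_fun A uv \<in> A \<rightarrow>\<^sub>E X \<times> Y"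
  unfolding zip_fun_def by (cases uv) auto

lemma unzip_fun_in_PiE: "z \<in> A \<rightarrow>\<^sub>E X \<times> Y \<Longrightarrow> unzip_fun A z \<in> (A \<rightarrow>\<^sub>E X) \<times> (A \<rightarrow>\<^sub>E Y)"
  unfolding unzip_fun_def by (auto simp: PiE_def Pi_def mem_Times_iff)

lemma bij_betw_zip_fun: "bij_betw (zip_fun A) ((A \<rightarrow>\<^sub>E X) \<times> (A \<rightarrow>\<^sub>E Y)) (A \<rightarrow>\<^sub>E X \<times> Y)"
  by (rule bij_betw_byWitness[where f' = "unzip_fun A"])
    (simp_all add: image_subset_iff unzip_zip_fun zip_unzip_fun zip_fun_in_PiE unzip_fun_in_PiE
      del: mem_Times_iff)

lemma bij_betw_unzip_fun: "bij_betw (unzip_fun A) (A \<rightarrow>\<^sub>E X \<times> Y) ((A \<rightarrow>\<^sub>E X) \<times> (A \<rightarrow>\<^sub>E Y))"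
  by (rule bij_betw_byWitness[where f' = "zip_fun A"])
    (simp_all add: image_subset_iff unzip_zip_fun zip_unzip_fun zip_fun_in_PiE unzip_fun_in_PiE
      del: mem_Times_iff)

lemma restrict_zip_fun:
  "B \<subseteq> A \<Longrightarrow> restrict (zip_fun A uv) B = zip_fun B (restrict (fst uv) B, restrict (snd uv) B)"
  unfolding zip_fun_def by (auto simp: fun_eq_iff)

lemma bij_betw_swap_middle: "bij_betw swap_middle ((A \<times> B) \<times> (C \<times> D)) ((A \<times> C) \<times> (B \<times> D))"
  by (rule bij_betw_byWitness[where f' = swap_middle]) (auto simp: swap_middle_def)

definition prod_transform ::
    "nat set \<Rightarrow> ((nat \<Rightarrow> 'a) \<Rightarrow> nat \<Rightarrow> 'a) \<Rightarrow> ((nat \<Rightarrow> 'b) \<Rightarrow> nat \<Rightarrow> 'b)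
      \<Rightarrow> (nat \<Rightarrow> 'a \<times> 'b) \<Rightarrow> nat \<Rightarrow> 'a \<times> 'b" where
  "prod_transform S \<phi> \<psi> = zip_fun S \<circ> map_prod \<phi> \<psi> \<circ> unzip_fun S"

lemma bij_betw_prod_transform:
  assumes "bij_betw \<phi> (S \<rightarrow>\<^sub>E X) (S \<rightarrow>\<^sub>E X)" and "bij_betw \<psi> (S \<rightarrow>\<^sub>E Y) (S \<rightarrow>\<^sub>E Y)"
  shows "bij_betw (prod_transform S \<phi> \<psi>) (S \<rightarrow>\<^sub>E X \<times> Y) (S \<rightarrow>\<^sub>E X \<times> Y)"
  unfolding prod_transform_def
  by (rule bij_betw_trans[OF bij_betw_unzip_fun
        bij_betw_trans[OF bij_betw_map_prod[OF assms] bij_betw_zip_fun]])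

lemma bij_betw_view_prod_transform:
  fixes \<phi> :: "(nat \<Rightarrow> 'a) \<Rightarrow> nat \<Rightarrow> 'a" and \<psi> :: "(nat \<Rightarrow> 'b) \<Rightarrow> nat \<Rightarrow> 'b"
  assumes "I \<subseteq> S" and "J \<subseteq> S"
    and \<phi>: "bij_betw (\<lambda>x. (restrict x I, restrict (\<phi> x) J)) (S \<rightarrow>\<^sub>E X) ((I \<rightarrow>\<^sub>E X) \<times> (J \<rightarrow>\<^sub>E X))"
    and \<psi>: "bij_betw (\<lambda>y. (restrict y I, restrict (\<psi> y) J)) (S \<rightarrow>\<^sub>E Y) ((I \<rightarrow>\<^sub>E Y) \<times> (J \<rightarrow>\<^sub>E Y))"
  shows "bij_betw (\<lambda>z. (restrict z I, restrict (prod_transform S \<phi> \<psi> z) J))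
    (S \<rightarrow>\<^sub>E X \<times> Y) ((I \<rightarrow>\<^sub>E X \<times> Y) \<times> (J \<rightarrow>\<^sub>E X \<times> Y))"
proof -
  define view_pair where "view_pair =
    map_prod (zip_fun I) (zip_fun J) \<circ> swap_middle \<circ>
      map_prod (\<lambda>x. (restrict x I, restrict (\<phi> x) J)) (\<lambda>y. (restrict y I, restrict (\<psi> y) J))"
  have "bij_betw view_pair ((S \<rightarrow>\<^sub>E X) \<times> (S \<rightarrow>\<^sub>E Y)) ((I \<rightarrow>\<^sub>E X \<times> Y) \<times> (J \<rightarrow>\<^sub>E X \<times> Y))"
    unfolding view_pair_def
    by (rule bij_betw_trans[OF bij_betw_map_prod[OF \<phi> \<psi>] bij_betw_trans[OF bij_betw_swap_middle
          bij_betw_map_prod[OF bij_betw_zip_fun bij_betw_zip_fun]]])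
  then have bij: "bij_betw (view_pair \<circ> unzip_fun S) (S \<rightarrow>\<^sub>E X \<times> Y)
      ((I \<rightarrow>\<^sub>E X \<times> Y) \<times> (J \<rightarrow>\<^sub>E X \<times> Y))"
    by (rule bij_betw_trans[OF bij_betw_unzip_fun])
  have "(restrict z I, restrict (prod_transform S \<phi> \<psi> z) J) = (view_pair \<circ> unzip_fun S) z"
    if z: "z \<in> S \<rightarrow>\<^sub>E X \<times> Y" for z
  proof -
    have "prod_transform S \<phi> \<psi> z = zip_fun S (map_prod \<phi> \<psi> (unzip_fun S z))"
      by (simp add: prod_transform_def)
    moreover have "z = zip_fun S (unzip_fun S z)"
      using z by (simp add: zip_unzip_fun)
    ultimately have "(restrict z I, restrict (prod_transform S \<phi> \<psi> z) J) =
        (zip_fun I (restrict (fst (unzip_fun S z)) I, restrict (snd (unzip_fun S z)) I),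
         zip_fun J (restrict (\<phi> (fst (unzip_fun S z))) J, restrict (\<psi> (snd (unzip_fun S z))) J))"
      by (metis restrict_zip_fun[OF assms(1)] restrict_zip_fun[OF assms(2)] fst_map_prod snd_map_prod)
    then show ?thesis
      by (simp add: view_pair_def swap_middle_def map_prod_def split_beta)
  qed
  then show ?thesis
    by (rule bij_betw_cong[THEN iffD2, OF _ bij])
qed

lemma is_AONT_product:
  assumes "is_AONT t s X \<phi>" and "is_AONT t s Y \<psi>"
  shows "is_AONT t s (X \<times> Y) (prod_transform {1..s} \<phi> \<psi>)"
  using assms
  by (auto simp: is_AONT_def intro!: bij_betw_prod_transform bij_betw_view_prod_transform)

theorem lemma3p1:
  fixes t s m n :: nat and X :: "'a set" and Y :: "'b set"
  assumes "t \<le> s" and "m \<ge> 1" and "n \<ge> 1"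
    and "finite X" and "card X = n" and "\<exists>\<phi>. is_AONT t s X \<phi>"
    and "finite Y" and "card Y = m" and "\<exists>\<psi>. is_AONT t s Y \<psi>"
  shows "\<exists>(Z :: ('a \<times> 'b) set) \<chi>. finite Z \<and> card Z = m * n \<and> is_AONT t s Z \<chi>"
proof -
  obtain \<phi> \<psi> where "is_AONT t s X \<phi>" and "is_AONT t s Y \<psi>"
    using assms by blast
  then have "is_AONT t s (X \<times> Y) (prod_transform {1..s} \<phi> \<psi>)"
    by (rule is_AONT_product)
  moreover have "finite (X \<times> Y)" and "card (X \<times> Y) = m * n"
    using assms by (simp_all add: card_cartesian_product)
  ultimately show ?thesis
    by blast
qed

end
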